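(* Let $I\subset S$ be a saturated Borel ideal, $\preceq$ any term order on the terms of $S$, and $p>q$ integers. If $I\cap\mathbb T_p$ is a segment with respect to $\preceq$, then $I\cap\mathbb T_q$ is a segment with respect to $\preceq$.
   Context: $S=K[x_0,\dots,x_n]$, $K$ algebraically closed of characteristic $0$, standard grading, $x_0<x_1<\dots<x_n$; $\mathbb T_t$ denotes the set of monomials (terms) of degree $t$. A monomial ideal is Borel if for every $t$, whenever $x^\alpha\in I\cap \mathbb T_t$ with $\alpha_j>0$ and $j<n$, also $x^\alpha x_{j+1}/x_j\in I$ (equivalently, $I\cap\mathbb T_t$ is closed under all such moves). Given a term order $\preceq$, a set $B\subseteq\mathbb T_t$ is a segment if whenever $\tau\in B$ and $\tau'\in\mathbb T_t$ with $\tau'\succ\tau$, then $\tau'\in B$. An ideal $I$ is saturated if $I=\bigcup_{h\ge0}(I:\mathfrak m^h)$ with $\mathfrak m=(x_0,\dots,x_n)$. *)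

theory Defs
  imports "HOL-Computational_Algebra.Polynomial" "HOL-Library.Poly_Mapping"
begin

text \<open>Terms (monomials) in the variables x_0,...,x_n are exponent vectors
  tau :: nat =>0 nat whose support lies in {0..n}; polynomials of
  S = K[x_0,...,x_n] are finitely supported maps from terms to coefficients
  whose support consists of such terms (multiplication = convolution).\<close>

type_synonym term_t = "nat \<Rightarrow>\<^sub>0 nat"
type_synonym 'a mpoly = "term_t \<Rightarrow>\<^sub>0 'a"

definition is_term :: "nat \<Rightarrow> term_t \<Rightarrow> bool" where
  "is_term n \<tau> \<longleftrightarrow> Poly_Mapping.keys \<tau> \<subseteq> {0..n}"

definition tdeg :: "term_t \<Rightarrow> nat" where
  "tdeg \<tau> = (\<Sum>i\<in>Poly_Mapping.keys \<tau>. Poly_Mapping.lookup \<tau> i)"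

text \<open>T_t : terms of degree t (t an integer; empty for negative t).\<close>
definition terms_of_deg :: "nat \<Rightarrow> int \<Rightarrow> term_t set" where
  "terms_of_deg n t = {\<tau>. is_term n \<tau> \<and> int (tdeg \<tau>) = t}"

definition polyring :: "nat \<Rightarrow> ('a::zero) mpoly set" where
  "polyring n = {f. \<forall>\<tau>\<in>Poly_Mapping.keys f. is_term n \<tau>}"

definition mon :: "term_t \<Rightarrow> ('a::{zero,one}) mpoly" where
  "mon \<tau> = Poly_Mapping.single \<tau> 1"

definition is_ideal :: "nat \<Rightarrow> ('a::comm_ring_1) mpoly set \<Rightarrow> bool" where
  "is_ideal n I \<longleftrightarrow> I \<subseteq> polyring n \<and> 0 \<in> I \<and>
     (\<forall>f\<in>I. \<forall>g\<in>I. f + g \<in> I) \<and>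
     (\<forall>f\<in>I. \<forall>g\<in>polyring n. g * f \<in> I)"

text \<open>Monomial ideal: an ideal generated by terms, i.e. it contains every
  term occurring in each of its elements.\<close>
definition monomial_ideal :: "nat \<Rightarrow> ('a::comm_ring_1) mpoly set \<Rightarrow> bool" where
  "monomial_ideal n I \<longleftrightarrow> is_ideal n I \<and> (\<forall>f\<in>I. \<forall>\<tau>\<in>Poly_Mapping.keys f. mon \<tau> \<in> I)"

definition ideal_terms_deg :: "nat \<Rightarrow> ('a::comm_ring_1) mpoly set \<Rightarrow> int \<Rightarrow> term_t set" where
  "ideal_terms_deg n I t = {\<tau>\<in>terms_of_deg n t. mon \<tau> \<in> I}"

definition borel_ideal :: "nat \<Rightarrow> ('a::comm_ring_1) mpoly set \<Rightarrow> bool" where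
  "borel_ideal n I \<longleftrightarrow> monomial_ideal n I \<and>
     (\<forall>t. \<forall>\<tau>\<in>ideal_terms_deg n I t. \<forall>j<n. Poly_Mapping.lookup \<tau> j > 0 \<longrightarrow>
        mon (\<tau> + Poly_Mapping.single (Suc j) 1 - Poly_Mapping.single j 1) \<in> I)"

text \<open>The irrelevant ideal m = (x_0,...,x_n) and its powers: m^h is the set of
  polynomials of S all of whose terms have degree at least h.\<close>
definition max_ideal_pow :: "nat \<Rightarrow> nat \<Rightarrow> ('a::comm_ring_1) mpoly set" where
  "max_ideal_pow n h = {g\<in>polyring n. \<forall>\<tau>\<in>Poly_Mapping.keys g. h \<le> tdeg \<tau>}"

definition ideal_colon :: "nat \<Rightarrow> ('a::comm_ring_1) mpoly set \<Rightarrow> 'a mpoly set \<Rightarrow> 'a mpoly set" where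
  "ideal_colon n I J = {f\<in>polyring n. \<forall>g\<in>J. f * g \<in> I}"

definition saturated :: "nat \<Rightarrow> ('a::comm_ring_1) mpoly set \<Rightarrow> bool" where
  "saturated n I \<longleftrightarrow> I = (\<Union>h. ideal_colon n I (max_ideal_pow n h))"

definition term_order :: "nat \<Rightarrow> (term_t \<Rightarrow> term_t \<Rightarrow> bool) \<Rightarrow> bool" where
  "term_order n le \<longleftrightarrow>
     (\<forall>a. is_term n a \<longrightarrow> le a a) \<and>
     (\<forall>a b. is_term n a \<longrightarrow> is_term n b \<longrightarrow> le a b \<longrightarrow> le b a \<longrightarrow> a = b) \<and>
     (\<forall>a b c. is_term n a \<longrightarrow> is_term n b \<longrightarrow> is_term n c \<longrightarrow> le a b \<longrightarrow> le b c \<longrightarrow> le a c) \<and>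
     (\<forall>a b. is_term n a \<longrightarrow> is_term n b \<longrightarrow> le a b \<or> le b a) \<and>
     (\<forall>a. is_term n a \<longrightarrow> le 0 a) \<and>
     (\<forall>a b c. is_term n a \<longrightarrow> is_term n b \<longrightarrow> is_term n c \<longrightarrow> le a b \<longrightarrow> le (a + c) (b + c))"

definition is_segment :: "nat \<Rightarrow> (term_t \<Rightarrow> term_t \<Rightarrow> bool) \<Rightarrow> int \<Rightarrow> term_t set \<Rightarrow> bool" where
  "is_segment n le t B \<longleftrightarrow> B \<subseteq> terms_of_deg n t \<and>
     (\<forall>\<tau>\<in>B. \<forall>\<tau>'\<in>terms_of_deg n t. (le \<tau> \<tau>' \<and> \<tau>' \<noteq> \<tau>) \<longrightarrow> \<tau>' \<in> B)"

end

theory Submission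
  imports Defs
begin

text \<open>
  Multiplication by x_0^(p-q) maps T_q into T_p and preserves the
  term order strictly, so if tau is in I \<inter> T_q and tau' is a larger term of
  degree q, then x_0^(p-q) tau is in I \<inter> T_p and x_0^(p-q) tau' is larger, hence
  also lies in I because I \<inter> T_p is a segment.  It remains to cancel the
  power of x_0, which is where both hypotheses on I enter: if x_0 sigma is in a
  Borel ideal then so is x_j sigma for every variable x_j, i.e. sigma lies in
  I : m; and a saturated ideal satisfies I : m = I.
\<close>

lemma tdeg_superset:
  assumes "finite A" "Poly_Mapping.keys \<tau> \<subseteq> A"
  shows "tdeg \<tau> = (\<Sum>i\<in>A. Poly_Mapping.lookup \<tau> i)"
  unfolding tdeg_def
  by (rule sum.mono_neutral_left) (use assms in \<open>auto simp: in_keys_iff\<close>)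

lemma tdeg_add: "tdeg (a + b) = tdeg a + tdeg b"
proof -
  let ?A = "Poly_Mapping.keys a \<union> Poly_Mapping.keys b"
  have "tdeg (a + b) = (\<Sum>i\<in>?A. Poly_Mapping.lookup (a + b) i)"
    using keys_add[of a b] by (intro tdeg_superset) auto
  also have "\<dots> = (\<Sum>i\<in>?A. Poly_Mapping.lookup a i) + (\<Sum>i\<in>?A. Poly_Mapping.lookup b i)"
    by (simp add: lookup_add sum.distrib)
  also have "\<dots> = tdeg a + tdeg b"
    by (subst (1 2) tdeg_superset) auto
  finally show ?thesis .
qed

lemma tdeg_single: "tdeg (Poly_Mapping.single i k) = k"
  by (subst tdeg_superset[of "{i}"]) auto

lemma is_term_add: "is_term n a \<Longrightarrow> is_term n b \<Longrightarrow> is_term n (a + b)"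
  unfolding is_term_def using keys_add[of a b] by blast

lemma is_term_single: "i \<le> n \<Longrightarrow> is_term n (Poly_Mapping.single i k)"
  unfolding is_term_def by auto

lemma terms_of_deg_shift:
  assumes "\<tau> \<in> terms_of_deg n t" "is_term n \<rho>"
  shows "\<tau> + \<rho> \<in> terms_of_deg n (t + int (tdeg \<rho>))"
  using assms unfolding terms_of_deg_def by (simp add: is_term_add tdeg_add)

lemma term_divisible_by_variable:
  assumes "is_term n k" "1 \<le> tdeg k"
  obtains i k' where "i \<le> n" "is_term n k'" "k = k' + Poly_Mapping.single i 1"
proof -
  obtain i where i: "i \<in> Poly_Mapping.keys k"
    using assms(2) unfolding tdeg_def by (metis not_one_le_zero sum.empty sum.neutral in_keys_iff)
  define k' where "k' = k - Poly_Mapping.single i 1"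
  have "k = k' + Poly_Mapping.single i 1"
    unfolding k'_def by (rule poly_mapping_eqI)
      (use i in \<open>auto simp: lookup_add lookup_minus lookup_single when_def in_keys_iff\<close>)
  moreover have "is_term n k'"
    using assms(1) unfolding is_term_def k'_def by (auto simp: in_keys_iff lookup_minus)
  moreover have "i \<le> n" using assms(1) i unfolding is_term_def by auto
  ultimately show ?thesis using that by blast
qed

lemma sum_of_terms: "(\<Sum>k\<in>Poly_Mapping.keys g. Poly_Mapping.single k (Poly_Mapping.lookup g k)) = g"
  by (rule poly_mapping_eqI) (simp add: lookup_sum lookup_single when_def in_keys_iff)

lemma ideal_sum:
  assumes "is_ideal n I" "finite A" "\<And>a. a \<in> A \<Longrightarrow> f a \<in> I"
  shows "sum f A \<in> I"
  using assms(2,3) by (induction A rule: finite_induct) (use assms(1) in \<open>auto simp: is_ideal_def\<close>)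

lemma ideal_mult_term:
  assumes "is_ideal n I" "is_term n \<sigma>" "mon \<tau> \<in> I"
  shows "mon (\<sigma> + \<tau>) \<in> I"
proof -
  have "mon \<sigma> \<in> polyring n" using assms(2) unfolding polyring_def mon_def by auto
  then have "mon \<sigma> * mon \<tau> \<in> I" using assms(1,3) unfolding is_ideal_def by blast
  then show ?thesis unfolding mon_def by (simp add: mult_single)
qed

lemma ideal_mem_if_terms_mem:
  assumes I: "is_ideal n I" and f: "f \<in> polyring n"
    and terms: "\<And>k. k \<in> Poly_Mapping.keys f \<Longrightarrow> mon k \<in> I"
  shows "f \<in> I"
proof -
  have "Poly_Mapping.single k (Poly_Mapping.lookup f k) \<in> I"
    if k: "k \<in> Poly_Mapping.keys f" for k
  proof -
    have "Poly_Mapping.single 0 (Poly_Mapping.lookup f k) \<in> polyring n"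
      unfolding polyring_def is_term_def by auto
    then have "Poly_Mapping.single 0 (Poly_Mapping.lookup f k) * mon k \<in> I"
      using I terms[OF k] unfolding is_ideal_def by blast
    then show ?thesis unfolding mon_def by (simp add: mult_single)
  qed
  then have "(\<Sum>k\<in>Poly_Mapping.keys f. Poly_Mapping.single k (Poly_Mapping.lookup f k)) \<in> I"
    by (intro ideal_sum[OF I]) auto
  then show ?thesis by (simp only: sum_of_terms)
qed

lemma keys_mon_mult:
  "Poly_Mapping.keys (mon \<sigma> * g) \<subseteq> (\<lambda>k. \<sigma> + k) ` Poly_Mapping.keys g"
  using keys_mult[of "mon \<sigma>" g] unfolding mon_def by (auto split: if_splits)

text \<open>Saturation criterion: if x_i x^sigma lies in a saturated ideal for every
  variable x_i, then x^sigma lies in I, since x^sigma is in I : m.\<close>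
lemma saturated_mem_if_all_variables:
  fixes I :: "('a::comm_ring_1) mpoly set"
  assumes I: "is_ideal n I" and S: "saturated n I" and \<sigma>: "is_term n \<sigma>"
    and vars: "\<And>i. i \<le> n \<Longrightarrow> mon (\<sigma> + Poly_Mapping.single i 1) \<in> I"
  shows "mon \<sigma> \<in> I"
proof -
  have "mon \<sigma> * g \<in> I" if g: "g \<in> max_ideal_pow n 1" for g :: "'a mpoly"
  proof (rule ideal_mem_if_terms_mem[OF I])
    have g_terms: "is_term n k" "1 \<le> tdeg k" if "k \<in> Poly_Mapping.keys g" for k
      using g that unfolding max_ideal_pow_def polyring_def by auto
    show "mon \<sigma> * g \<in> polyring n"
      using keys_mon_mult[of \<sigma> g] g_terms \<sigma> unfolding polyring_def by (auto intro: is_term_add)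
    fix m assume "m \<in> Poly_Mapping.keys (mon \<sigma> * g)"
    then obtain k where k: "k \<in> Poly_Mapping.keys g" and m: "m = \<sigma> + k"
      using keys_mon_mult by blast
    obtain i k' where "i \<le> n" "is_term n k'" and k_eq: "k = k' + Poly_Mapping.single i 1"
      using term_divisible_by_variable g_terms[OF k] by blast
    then have "mon (k' + (\<sigma> + Poly_Mapping.single i 1)) \<in> I"
      using ideal_mult_term[OF I] vars by blast
    then show "mon m \<in> I" by (simp add: m k_eq ac_simps)
  qed
  then have "mon \<sigma> \<in> ideal_colon n I (max_ideal_pow n 1)"
    using \<sigma> unfolding ideal_colon_def polyring_def mon_def by auto
  then show ?thesis using S unfolding saturated_def by blast
qed

text \<open>Borel moves: if x_0 x^sigma is in a Borel ideal, then so is x_j x^sigma for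
  every j \<le> n (move the extra variable up one index at a time).\<close>
lemma borel_shift_variable:
  fixes I :: "('a::comm_ring_1) mpoly set"
  assumes B: "borel_ideal n I" and \<sigma>: "is_term n \<sigma>"
    and x0: "mon (\<sigma> + Poly_Mapping.single 0 1) \<in> I"
  shows "j \<le> n \<Longrightarrow> mon (\<sigma> + Poly_Mapping.single j 1) \<in> I"
proof (induction j)
  case 0
  then show ?case using x0 by simp
next
  case (Suc j)
  let ?\<tau> = "\<sigma> + Poly_Mapping.single j 1"
  have "is_term n ?\<tau>" using Suc.prems \<sigma> by (intro is_term_add is_term_single) auto
  then have "?\<tau> \<in> ideal_terms_deg n I (int (tdeg ?\<tau>))"
    using Suc unfolding ideal_terms_deg_def terms_of_deg_def by auto
  moreover have "Poly_Mapping.lookup ?\<tau> j > 0" by (simp add: lookup_add)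
  ultimately have "mon (?\<tau> + Poly_Mapping.single (Suc j) 1 - Poly_Mapping.single j 1) \<in> I"
    using B Suc.prems unfolding borel_ideal_def by auto
  moreover have "?\<tau> + Poly_Mapping.single (Suc j) 1 - Poly_Mapping.single j 1
      = \<sigma> + Poly_Mapping.single (Suc j) 1"
    by (metis add.commute add.left_commute add_diff_cancel_left')
  ultimately show ?case by simp
qed

lemma borel_saturated_cancel_x0_power:
  fixes I :: "('a::comm_ring_1) mpoly set"
  assumes B: "borel_ideal n I" and S: "saturated n I" and \<sigma>: "is_term n \<sigma>"
  shows "mon (\<sigma> + Poly_Mapping.single 0 d) \<in> I \<Longrightarrow> mon \<sigma> \<in> I"
proof (induction d)
  case 0
  then show ?case by simp
next
  case (Suc d)
  have I: "is_ideal n I" using B unfolding borel_ideal_def monomial_ideal_def by auto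
  let ?\<sigma>' = "\<sigma> + Poly_Mapping.single 0 d"
  have \<sigma>': "is_term n ?\<sigma>'" using \<sigma> by (simp add: is_term_add is_term_single)
  have "mon (?\<sigma>' + Poly_Mapping.single 0 1) \<in> I"
    using Suc.prems by (simp add: single_add[symmetric] ac_simps)
  then have "mon ?\<sigma>' \<in> I"
    using saturated_mem_if_all_variables[OF I S \<sigma>'] borel_shift_variable[OF B \<sigma>'] by blast
  then show ?case by (rule Suc.IH)
qed

lemma term_order_strict_mono:
  assumes "term_order n le" "is_term n a" "is_term n b" "is_term n c"
    and "le a b" "b \<noteq> a"
  shows "le (a + c) (b + c) \<and> b + c \<noteq> a + c"
proof
  have "\<forall>a b c. is_term n a \<longrightarrow> is_term n b \<longrightarrow> is_term n c \<longrightarrow> le a b \<longrightarrow> le (a + c) (b + c)"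
    using assms(1) unfolding term_order_def by (elim conjE) assumption
  then show "le (a + c) (b + c)" using assms(2-5) by blast
  show "b + c \<noteq> a + c" using assms(6) by simp
qed

theorem mainTheorem2:
  fixes n :: nat and I :: "('a::{alg_closed_field, field_char_0}) mpoly set"
    and le :: "term_t \<Rightarrow> term_t \<Rightarrow> bool" and p q :: int
  assumes "borel_ideal n I" and "saturated n I" and "term_order n le" and "p > q"
    and "is_segment n le p (ideal_terms_deg n I p)"
  shows "is_segment n le q (ideal_terms_deg n I q)"
  unfolding is_segment_def
proof (intro conjI ballI impI)
  show "ideal_terms_deg n I q \<subseteq> terms_of_deg n q" unfolding ideal_terms_deg_def by auto
  define \<rho> :: term_t where "\<rho> = Poly_Mapping.single 0 (nat (p - q))"
  have \<rho>: "is_term n \<rho>" "q + int (tdeg \<rho>) = p"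
    using \<open>p > q\<close> unfolding \<rho>_def by (auto simp: is_term_single tdeg_single)
  have I: "is_ideal n I" using assms(1) unfolding borel_ideal_def monomial_ideal_def by auto
  fix \<tau> \<tau>' assume \<tau>: "\<tau> \<in> ideal_terms_deg n I q" and \<tau>': "\<tau>' \<in> terms_of_deg n q"
    and larger: "le \<tau> \<tau>' \<and> \<tau>' \<noteq> \<tau>"
  have \<tau>_deg: "\<tau> \<in> terms_of_deg n q" and "mon \<tau> \<in> I"
    using \<tau> unfolding ideal_terms_deg_def by auto
  then have "mon (\<tau> + \<rho>) \<in> I" using ideal_mult_term[OF I \<rho>(1)] by (metis add.commute)
  then have "\<tau> + \<rho> \<in> ideal_terms_deg n I p"
    using terms_of_deg_shift[OF \<tau>_deg \<rho>(1)] \<rho>(2) unfolding ideal_terms_deg_def by simp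
  moreover have "\<tau>' + \<rho> \<in> terms_of_deg n p" using terms_of_deg_shift[OF \<tau>' \<rho>(1)] \<rho>(2) by simp
  moreover have "le (\<tau> + \<rho>) (\<tau>' + \<rho>) \<and> \<tau>' + \<rho> \<noteq> \<tau> + \<rho>"
    using term_order_strict_mono[OF assms(3) _ _ \<rho>(1)] \<tau>_deg \<tau>' larger
    unfolding terms_of_deg_def by simp
  ultimately have "mon (\<tau>' + \<rho>) \<in> I"
    using assms(5) unfolding is_segment_def ideal_terms_deg_def by blast
  moreover have "is_term n \<tau>'" using \<tau>' unfolding terms_of_deg_def by simp
  ultimately show "\<tau>' \<in> ideal_terms_deg n I q"
    using borel_saturated_cancel_x0_power[OF assms(1,2), of \<tau>' "nat (p - q)"] \<tau>'
    unfolding \<rho>_def ideal_terms_deg_def by simp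
qed

end
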